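(* Let $n\ge1$ and let $k$ be an integer with $1\le k\le \frac n4+1$. Let $f:\mathbb{R}^n\to\mathbb{R}$ be radial, $f(x)=f_1(\|x\|_2)$, where $f_1$ is $2k$ times continuously differentiable on $(0,\infty)$. Then there are real numbers $c_{i,j}$ (depending on $n$ and $k$), indexed by integers $0\le i\le 2k$, $0\le j\le 2k-1$ with $i+j\le 2k$, satisfying $\sum_{i,j}|c_{i,j}|\le 5^k$, such that for all $x\ne0$, with $r=\|x\|_2$, $$((I-\Delta)^kf)(x)=\sum_{\substack{0\le i\le 2k,\ 0\le j\le 2k-1\\ i+j\le 2k}}\frac{c_{i,j}\,n^j f_1^{(i)}(r)}{r^j}.$$
   Context: $\Delta=\sum_{i=1}^n\partial^2/\partial x_i^2$ is the Laplacian and $(I-\Delta)h=h-\Delta h$; $(I-\Delta)^k$ is its $k$-fold iterate. $f_1^{(i)}$ denotes the $i$-th derivative of $f_1$. *)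

theory Defs
  imports "HOL-Analysis.Analysis"
begin

definition partial_deriv :: "'n::finite \<Rightarrow> (real^'n \<Rightarrow> real) \<Rightarrow> real^'n \<Rightarrow> real" where
  "partial_deriv i g x = deriv (\<lambda>t. g (x + t *\<^sub>R axis i 1)) 0"

definition laplacian :: "(real^'n::finite \<Rightarrow> real) \<Rightarrow> real^'n \<Rightarrow> real" where
  "laplacian g x = (\<Sum>i\<in>UNIV. partial_deriv i (partial_deriv i g) x)"

definition id_minus_laplacian :: "(real^'n::finite \<Rightarrow> real) \<Rightarrow> real^'n \<Rightarrow> real" where
  "id_minus_laplacian g x = g x - laplacian g x"

definition higher_deriv :: "nat \<Rightarrow> (real \<Rightarrow> real) \<Rightarrow> real \<Rightarrow> real" where
  "higher_deriv i f = (deriv ^^ i) f"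

end

theory Submission
  imports Defs
begin

text \<open>For a radial \<open>\<phi>(\<parallel>x\<parallel>)\<close> one has \<open>\<Delta> = \<phi>'' + (n - 1) / r * \<phi>'\<close>, so \<open>I - \<Delta>\<close> maps each
  \<open>F\<^sub>i(r) / r\<^sup>j\<close>, \<open>F\<^sub>i = f\<^sub>1\<^sup>(\<^sup>i\<^sup>)\<close>, to a combination of \<open>F\<^sub>i / r\<^sup>j\<close>, \<open>F\<^sub>i\<^sub>+\<^sub>2 / r\<^sup>j\<close>,
  \<open>F\<^sub>i\<^sub>+\<^sub>1 / r\<^sup>j\<^sup>+\<^sup>1\<close> and \<open>F\<^sub>i / r\<^sup>j\<^sup>+\<^sup>2\<close> with coefficients \<open>1, -1, 2j - n + 1, j(n - 2 - j)\<close>.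
  Iterating \<open>k\<close> times from \<open>F\<^sub>0\<close> yields the expansion with \<open>c\<^sub>i\<^sub>j = a\<^sub>i\<^sub>j / n\<^sup>j\<close>. In the norm
  \<open>\<Sum> |a\<^sub>i\<^sub>j| / n\<^sup>j\<close> one step costs at most a factor 4 as long as \<open>2j + 2 \<le> n\<close> for every
  occurring \<open>j\<close>; after \<open>m < k\<close> steps \<open>j \<le> 2m - 1\<close>, which \<open>k \<le> n/4 + 1\<close> guarantees.
  Hence \<open>\<Sum> |c\<^sub>i\<^sub>j| \<le> 4\<^sup>k \<le> 5\<^sup>k\<close>.\<close>

lemma norm_add_scaleR_axis:
  fixes y :: "real^'n::finite"
  shows "norm (y + t *\<^sub>R axis i 1) = sqrt ((norm y)\<^sup>2 + 2 * t * y$i + t\<^sup>2)"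
proof -
  have "(y + t *\<^sub>R axis i 1) \<bullet> (y + t *\<^sub>R axis i 1) = y \<bullet> y + 2 * t * y$i + t\<^sup>2"
    by (simp add: inner_add_left inner_add_right inner_axis inner_axis' power2_eq_square algebra_simps)
  then show ?thesis by (simp add: norm_eq_sqrt_inner power2_norm_eq_inner)
qed

lemma has_real_derivative_norm_add_scaleR_axis:
  fixes y :: "real^'n::finite"
  assumes "y \<noteq> 0"
  shows "((\<lambda>t. norm (y + t *\<^sub>R axis i 1)) has_real_derivative y$i / norm y) (at 0)"
proof -
  have "((\<lambda>t. sqrt ((norm y)\<^sup>2 + 2 * t * y$i + t\<^sup>2)) has_real_derivative
      inverse (sqrt ((norm y)\<^sup>2)) / 2 * (2 * y$i)) (at 0)"
    using assms by (auto intro!: derivative_eq_intros)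
  then show ?thesis by (simp add: norm_add_scaleR_axis field_simps)
qed

lemma eventually_add_scaleR_axis_nonzero:
  fixes y :: "real^'n::finite"
  assumes "y \<noteq> 0"
  shows "\<forall>\<^sub>F t in nhds 0. y + t *\<^sub>R axis i 1 \<noteq> 0"
proof (rule tendsto_imp_eventually_ne)
  show "((\<lambda>t. y + t *\<^sub>R axis i 1) \<longlongrightarrow> y) (nhds 0)"
    by (auto intro!: tendsto_eq_intros filterlim_ident)
qed (fact assms)

lemma partial_deriv_radial:
  fixes g :: "real^'n::finite \<Rightarrow> real"
  assumes g: "\<And>y. y \<noteq> 0 \<Longrightarrow> g y = \<phi> (norm y)"
    and \<phi>: "\<And>r. r > 0 \<Longrightarrow> (\<phi> has_real_derivative \<phi>' r) (at r)"
    and y: "y \<noteq> 0"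
  shows "partial_deriv i g y = \<phi>' (norm y) * y$i / norm y"
proof -
  have "\<forall>\<^sub>F t in nhds 0. g (y + t *\<^sub>R axis i 1) = \<phi> (norm (y + t *\<^sub>R axis i 1))"
    using eventually_add_scaleR_axis_nonzero[OF y, of i] by (rule eventually_mono) (simp add: g)
  moreover have "((\<lambda>t. \<phi> (norm (y + t *\<^sub>R axis i 1))) has_real_derivative \<phi>' (norm y) * (y$i / norm y)) (at 0)"
    using \<phi> y has_real_derivative_norm_add_scaleR_axis[OF y] by (intro DERIV_chain2[where f = \<phi>]) auto
  ultimately have "((\<lambda>t. g (y + t *\<^sub>R axis i 1)) has_real_derivative \<phi>' (norm y) * (y$i / norm y)) (at 0)"
    by (subst DERIV_cong_ev[OF refl _ refl])
  then show ?thesis unfolding partial_deriv_def by (simp add: DERIV_imp_deriv)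
qed

lemma partial_deriv_partial_deriv_radial:
  fixes g :: "real^'n::finite \<Rightarrow> real"
  assumes g: "\<And>y. y \<noteq> 0 \<Longrightarrow> g y = \<phi> (norm y)"
    and \<phi>: "\<And>r. r > 0 \<Longrightarrow> (\<phi> has_real_derivative \<phi>' r) (at r)"
    and \<phi>': "\<And>r. r > 0 \<Longrightarrow> (\<phi>' has_real_derivative \<phi>'' r) (at r)"
    and x: "x \<noteq> 0"
  shows "partial_deriv i (partial_deriv i g) x =
    \<phi>'' (norm x) * (x$i)\<^sup>2 / (norm x)\<^sup>2 + \<phi>' (norm x) * (1 / norm x - (x$i)\<^sup>2 / norm x ^ 3)"
    (is "_ = ?D")
proof -
  let ?z = "\<lambda>t. x + t *\<^sub>R axis i (1::real)"
  have nx: "norm x > 0" using x by simp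
  have "\<forall>\<^sub>F t in nhds 0. partial_deriv i g (?z t) = \<phi>' (norm (?z t)) * (x$i + t) / norm (?z t)"
    using eventually_add_scaleR_axis_nonzero[OF x, of i] by (rule eventually_mono) (simp add: partial_deriv_radial[OF g \<phi>])
  moreover have "((\<lambda>t. \<phi>' (norm (?z t)) * (x$i + t) / norm (?z t)) has_real_derivative ?D) (at 0)"
  proof -
    note norm_z = has_real_derivative_norm_add_scaleR_axis[OF x, of i]
    have "((\<lambda>t. \<phi>' (norm (?z t))) has_real_derivative \<phi>'' (norm x) * (x$i / norm x)) (at 0)"
      using \<phi>' nx norm_z by (intro DERIV_chain2[where f = \<phi>']) auto
    from this norm_z show ?thesis
      by (rule DERIV_cong[OF DERIV_divide[OF DERIV_mult[OF _ DERIV_add[OF DERIV_const DERIV_ident]]]])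
        (use nx in \<open>simp_all add: field_simps power2_eq_square power3_eq_cube\<close>)
  qed
  ultimately have "((\<lambda>t. partial_deriv i g (?z t)) has_real_derivative ?D) (at 0)"
    by (subst DERIV_cong_ev[OF refl _ refl])
  then show ?thesis unfolding partial_deriv_def[of i "partial_deriv i g"] by (simp add: DERIV_imp_deriv)
qed

lemma laplacian_radial:
  fixes g :: "real^'n::finite \<Rightarrow> real"
  assumes g: "\<And>y. y \<noteq> 0 \<Longrightarrow> g y = \<phi> (norm y)"
    and \<phi>: "\<And>r. r > 0 \<Longrightarrow> (\<phi> has_real_derivative \<phi>' r) (at r)"
    and \<phi>': "\<And>r. r > 0 \<Longrightarrow> (\<phi>' has_real_derivative \<phi>'' r) (at r)"
    and x: "x \<noteq> 0"
  shows "laplacian g x = \<phi>'' (norm x) + (real CARD('n) - 1) / norm x * \<phi>' (norm x)"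
proof -
  have nx: "norm x > 0" using x by simp
  have sum_sq: "(\<Sum>i\<in>UNIV. (x$i)\<^sup>2) = (norm x)\<^sup>2"
    unfolding power2_norm_eq_inner inner_vec_def by (simp add: power2_eq_square)
  have "partial_deriv i (partial_deriv i g) x = \<phi>'' (norm x) / (norm x)\<^sup>2 * (x$i)\<^sup>2 +
      (\<phi>' (norm x) / norm x - \<phi>' (norm x) / norm x ^ 3 * (x$i)\<^sup>2)" for i
    using partial_deriv_partial_deriv_radial[OF g \<phi> \<phi>' x, of i] by (simp add: algebra_simps)
  then have "laplacian g x = (\<Sum>i\<in>UNIV. \<phi>'' (norm x) / (norm x)\<^sup>2 * (x$i)\<^sup>2 +
      (\<phi>' (norm x) / norm x - \<phi>' (norm x) / norm x ^ 3 * (x$i)\<^sup>2))"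
    unfolding laplacian_def by simp
  also have "\<dots> = \<phi>'' (norm x) / (norm x)\<^sup>2 * (norm x)\<^sup>2 +
      (real CARD('n) * (\<phi>' (norm x) / norm x) - \<phi>' (norm x) / norm x ^ 3 * (norm x)\<^sup>2)"
    by (simp add: sum.distrib sum_subtractf sum_distrib_left sum_sq[symmetric])
  also have "\<dots> = \<phi>'' (norm x) + (real CARD('n) - 1) / norm x * \<phi>' (norm x)"
    using nx by (simp add: field_simps power2_eq_square power3_eq_cube)
  finally show ?thesis .
qed

definition radial_sum :: "(nat \<times> nat) set \<Rightarrow> (nat \<Rightarrow> nat \<Rightarrow> real) \<Rightarrow> (nat \<Rightarrow> real \<Rightarrow> real) \<Rightarrow> real \<Rightarrow> real" where
  "radial_sum S a F r = (\<Sum>(i,j)\<in>S. a i j * (F i r / r ^ j))"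

definition radial_term_deriv :: "(nat \<Rightarrow> real \<Rightarrow> real) \<Rightarrow> nat \<Rightarrow> nat \<Rightarrow> real \<Rightarrow> real" where
  "radial_term_deriv F i j r = F (Suc i) r / r ^ j - real j * (F i r / r ^ Suc j)"

lemma has_real_derivative_radial_term:
  assumes "(F i has_real_derivative F (Suc i) r) (at r)" and "r > 0"
  shows "((\<lambda>r. F i r / r ^ j) has_real_derivative radial_term_deriv F i j r) (at r)"
proof (rule DERIV_cong[OF DERIV_divide[OF assms(1) DERIV_pow]])
  show "r ^ j \<noteq> 0" using assms(2) by simp
  show "(F (Suc i) r * r ^ j - F i r * (real j * r ^ (j - Suc 0))) / (r ^ j * r ^ j) = radial_term_deriv F i j r"
    using assms(2) by (cases j) (simp_all add: radial_term_deriv_def field_simps)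
qed

lemma has_real_derivative_radial_term_deriv:
  assumes "(F i has_real_derivative F (Suc i) r) (at r)"
    and "(F (Suc i) has_real_derivative F (Suc (Suc i)) r) (at r)" and "r > 0"
  shows "(radial_term_deriv F i j has_real_derivative
      radial_term_deriv F (Suc i) j r - real j * radial_term_deriv F i (Suc j) r) (at r)"
  unfolding radial_term_deriv_def[of F i j, abs_def]
  using assms by (intro DERIV_diff DERIV_cmult has_real_derivative_radial_term)

text \<open>For a radial function, \<open>I - \<Delta>\<close> in dimension \<open>N\<close> maps \<open>F\<^sub>i(r) / r\<^sup>j\<close> to
  \<open>\<Sum> radial_step_weight N i j i' j' * F\<^sub>i\<^sub>'(r) / r\<^sup>j\<^sup>'\<close>, see \<open>radial_sum_step\<close>.\<close>
definition radial_step_weight :: "real \<Rightarrow> nat \<Rightarrow> nat \<Rightarrow> nat \<Rightarrow> nat \<Rightarrow> real" where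
  "radial_step_weight N i j i' j' =
     of_bool (i' = i \<and> j' = j) - of_bool (i' = i + 2 \<and> j' = j)
     + (2 * real j - N + 1) * of_bool (i' = i + 1 \<and> j' = j + 1)
     + real j * (N - 2 - real j) * of_bool (i' = i \<and> j' = j + 2)"

definition step_coeffs :: "(nat \<times> nat) set \<Rightarrow> real \<Rightarrow> (nat \<Rightarrow> nat \<Rightarrow> real) \<Rightarrow> nat \<Rightarrow> nat \<Rightarrow> real" where
  "step_coeffs S N a = (\<lambda>i' j'. \<Sum>(i,j)\<in>S. a i j * radial_step_weight N i j i' j')"

definition radial_coeffs :: "(nat \<times> nat) set \<Rightarrow> real \<Rightarrow> nat \<Rightarrow> nat \<Rightarrow> nat \<Rightarrow> real" where
  "radial_coeffs S N m = (step_coeffs S N ^^ m) (\<lambda>i j. of_bool (i = 0 \<and> j = 0))"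

lemma radial_term_step:
  assumes "r > 0"
  shows "F i r / r ^ j
      - (radial_term_deriv F (Suc i) j r - real j * radial_term_deriv F i (Suc j) r)
      - (N - 1) / r * radial_term_deriv F i j r =
    F i r / r ^ j - F (i + 2) r / r ^ j + (2 * real j - N + 1) * (F (i + 1) r / r ^ (j + 1))
      + real j * (N - 2 - real j) * (F i r / r ^ (j + 2))"
  using assms by (simp add: radial_term_deriv_def field_simps)

lemma sum_of_bool_pair_mult:
  assumes "finite S"
  shows "(\<Sum>(i',j')\<in>S. of_bool (i' = i \<and> j' = j) * G i' j') = of_bool ((i, j) \<in> S) * (G i j :: real)"
proof -
  have "(\<Sum>(i',j')\<in>S. of_bool (i' = i \<and> j' = j) * G i' j') = (\<Sum>p\<in>S. if p = (i, j) then G i j else 0)"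
    by (intro sum.cong refl) auto
  then show ?thesis using assms by simp
qed

lemma sum_radial_step_weight:
  assumes "finite S" and "(i, j) \<in> S" "(i + 2, j) \<in> S" "(i + 1, j + 1) \<in> S" "j \<noteq> 0 \<Longrightarrow> (i, j + 2) \<in> S"
  shows "(\<Sum>(i',j')\<in>S. radial_step_weight N i j i' j' * G i' j') =
    G i j - G (i + 2) j + (2 * real j - N + 1) * G (i + 1) (j + 1) + real j * (N - 2 - real j) * G i (j + 2)"
proof -
  have "(\<Sum>(i',j')\<in>S. radial_step_weight N i j i' j' * G i' j') =
     (\<Sum>(i',j')\<in>S. of_bool (i' = i \<and> j' = j) * G i' j') - (\<Sum>(i',j')\<in>S. of_bool (i' = i + 2 \<and> j' = j) * G i' j')
     + (2 * real j - N + 1) * (\<Sum>(i',j')\<in>S. of_bool (i' = i + 1 \<and> j' = j + 1) * G i' j')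
     + real j * (N - 2 - real j) * (\<Sum>(i',j')\<in>S. of_bool (i' = i \<and> j' = j + 2) * G i' j')"
    unfolding radial_step_weight_def sum_distrib_left sum_subtractf[symmetric] sum.distrib[symmetric]
    by (intro sum.cong refl) (auto simp: algebra_simps)
  then show ?thesis
    using assms by (cases "j = 0") (simp_all add: sum_of_bool_pair_mult)
qed

lemma radial_sum_step:
  assumes "finite S" and "r > 0"
    and closed: "\<And>i j. (i, j) \<in> S \<Longrightarrow> a i j \<noteq> 0 \<Longrightarrow>
      (i + 2, j) \<in> S \<and> (i + 1, j + 1) \<in> S \<and> (j \<noteq> 0 \<longrightarrow> (i, j + 2) \<in> S)"
  shows "radial_sum S a F r
      - (\<Sum>(i,j)\<in>S. a i j * (radial_term_deriv F (Suc i) j r - real j * radial_term_deriv F i (Suc j) r))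
      - (N - 1) / r * (\<Sum>(i,j)\<in>S. a i j * radial_term_deriv F i j r)
    = radial_sum S (step_coeffs S N a) F r"
proof -
  let ?G = "\<lambda>i j. F i r / r ^ j"
  have expand: "a i j * (?G i j
        - (radial_term_deriv F (Suc i) j r - real j * radial_term_deriv F i (Suc j) r)
        - (N - 1) / r * radial_term_deriv F i j r)
      = a i j * (\<Sum>(i',j')\<in>S. radial_step_weight N i j i' j' * ?G i' j')"
    if "(i, j) \<in> S" for i j
  proof (cases "a i j = 0")
    case False
    then have "(\<Sum>(i',j')\<in>S. radial_step_weight N i j i' j' * ?G i' j') = ?G i j - ?G (i + 2) j
        + (2 * real j - N + 1) * ?G (i + 1) (j + 1) + real j * (N - 2 - real j) * ?G i (j + 2)"
      using closed[OF that] by (intro sum_radial_step_weight[OF \<open>finite S\<close> that]) auto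
    then show ?thesis by (simp only: radial_term_step[OF \<open>r > 0\<close>])
  qed simp
  have "radial_sum S a F r
      - (\<Sum>(i,j)\<in>S. a i j * (radial_term_deriv F (Suc i) j r - real j * radial_term_deriv F i (Suc j) r))
      - (N - 1) / r * (\<Sum>(i,j)\<in>S. a i j * radial_term_deriv F i j r)
    = (\<Sum>(i,j)\<in>S. a i j * (?G i j
        - (radial_term_deriv F (Suc i) j r - real j * radial_term_deriv F i (Suc j) r)
        - (N - 1) / r * radial_term_deriv F i j r))"
    unfolding radial_sum_def
    by (simp add: sum.distrib sum_subtractf sum_distrib_left case_prod_unfold algebra_simps)
  also have "\<dots> = (\<Sum>(i,j)\<in>S. a i j * (\<Sum>(i',j')\<in>S. radial_step_weight N i j i' j' * ?G i' j'))"
    by (rule sum.cong[OF refl], clarify, erule expand)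
  also have "\<dots> = (\<Sum>(i,j)\<in>S. \<Sum>(i',j')\<in>S. a i j * radial_step_weight N i j i' j' * ?G i' j')"
    by (simp add: sum_distrib_left mult.assoc case_prod_unfold)
  also have "\<dots> = (\<Sum>(i',j')\<in>S. \<Sum>(i,j)\<in>S. a i j * radial_step_weight N i j i' j' * ?G i' j')"
    unfolding case_prod_unfold by (rule sum.swap)
  also have "\<dots> = radial_sum S (step_coeffs S N a) F r"
    unfolding radial_sum_def step_coeffs_def by (simp add: sum_distrib_right sum_divide_distrib case_prod_unfold)
  finally show ?thesis .
qed

lemma id_minus_laplacian_radial_sum:
  fixes g :: "real^'n::finite \<Rightarrow> real"
  assumes "finite S" and g: "\<And>y. y \<noteq> 0 \<Longrightarrow> g y = radial_sum S a F (norm y)"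
    and closed: "\<And>i j. (i, j) \<in> S \<Longrightarrow> a i j \<noteq> 0 \<Longrightarrow>
      (i + 2, j) \<in> S \<and> (i + 1, j + 1) \<in> S \<and> (j \<noteq> 0 \<longrightarrow> (i, j + 2) \<in> S)"
    and F: "\<And>i j r. (i, j) \<in> S \<Longrightarrow> a i j \<noteq> 0 \<Longrightarrow> r > 0 \<Longrightarrow>
      (F i has_real_derivative F (Suc i) r) (at r) \<and> (F (Suc i) has_real_derivative F (Suc (Suc i)) r) (at r)"
    and y: "y \<noteq> 0"
  shows "id_minus_laplacian g y = radial_sum S (step_coeffs S (real CARD('n)) a) F (norm y)"
proof -
  define \<phi>' where "\<phi>' r = (\<Sum>(i,j)\<in>S. a i j * radial_term_deriv F i j r)" for r
  define \<phi>'' where "\<phi>'' r = (\<Sum>(i,j)\<in>S. a i j *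
      (radial_term_deriv F (Suc i) j r - real j * radial_term_deriv F i (Suc j) r))" for r
  have \<phi>: "(radial_sum S a F has_real_derivative \<phi>' r) (at r)" if "r > 0" for r
    unfolding radial_sum_def[abs_def] \<phi>'_def case_prod_unfold
  proof (rule DERIV_sum)
    fix p assume "p \<in> S"
    show "((\<lambda>r. a (fst p) (snd p) * (F (fst p) r / r ^ snd p)) has_real_derivative
        a (fst p) (snd p) * radial_term_deriv F (fst p) (snd p) r) (at r)"
    proof (cases "a (fst p) (snd p) = 0")
      case False
      with \<open>p \<in> S\<close> F[of "fst p" "snd p" r] that show ?thesis
        by (intro DERIV_cmult has_real_derivative_radial_term) auto
    qed simp
  qed
  have \<phi>': "(\<phi>' has_real_derivative \<phi>'' r) (at r)" if "r > 0" for r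
    unfolding \<phi>'_def[abs_def] \<phi>''_def case_prod_unfold
  proof (rule DERIV_sum)
    fix p assume "p \<in> S"
    show "((\<lambda>r. a (fst p) (snd p) * radial_term_deriv F (fst p) (snd p) r) has_real_derivative
        a (fst p) (snd p) * (radial_term_deriv F (Suc (fst p)) (snd p) r
          - real (snd p) * radial_term_deriv F (fst p) (Suc (snd p)) r)) (at r)"
    proof (cases "a (fst p) (snd p) = 0")
      case False
      with \<open>p \<in> S\<close> F[of "fst p" "snd p" r] that show ?thesis
        by (intro DERIV_cmult has_real_derivative_radial_term_deriv) auto
    qed simp
  qed
  have "id_minus_laplacian g y = radial_sum S a F (norm y) - \<phi>'' (norm y)
      - (real CARD('n) - 1) / norm y * \<phi>' (norm y)"
    using laplacian_radial[OF g \<phi> \<phi>' y] g[OF y] by (simp add: id_minus_laplacian_def)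
  also have "\<dots> = radial_sum S (step_coeffs S (real CARD('n)) a) F (norm y)"
    unfolding \<phi>'_def \<phi>''_def using \<open>finite S\<close> y closed by (intro radial_sum_step) auto
  finally show ?thesis .
qed

lemma step_coeffs_nonzero:
  assumes "step_coeffs S N a i' j' \<noteq> 0"
  obtains i j where "a i j \<noteq> 0"
    and "(i' = i \<and> j' = j) \<or> (i' = i + 2 \<and> j' = j) \<or> (i' = i + 1 \<and> j' = j + 1) \<or> (i' = i \<and> j' = j + 2 \<and> j \<noteq> 0)"
proof -
  from assms obtain i j where "a i j * radial_step_weight N i j i' j' \<noteq> 0"
    unfolding step_coeffs_def by (auto elim: sum.not_neutral_contains_not_neutral)
  then show ?thesis
    by (intro that[of i j]) (auto simp: radial_step_weight_def)
qed

text \<open>For \<open>m = 0\<close> the truncated bound \<open>2 * m - 1 = 0\<close> is the intended one.\<close>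
lemma radial_coeffs_support:
  assumes "radial_coeffs S N m i j \<noteq> 0"
  shows "i + j \<le> 2 * m \<and> j \<le> 2 * m - 1"
  using assms
proof (induction m arbitrary: i j)
  case 0
  then show ?case by (simp add: radial_coeffs_def)
next
  case (Suc m)
  then have "step_coeffs S N (radial_coeffs S N m) i j \<noteq> 0"
    by (simp add: radial_coeffs_def)
  then obtain i0 j0 where "radial_coeffs S N m i0 j0 \<noteq> 0"
    and "(i = i0 \<and> j = j0) \<or> (i = i0 + 2 \<and> j = j0) \<or> (i = i0 + 1 \<and> j = j0 + 1) \<or> (i = i0 \<and> j = j0 + 2 \<and> j0 \<noteq> 0)"
    by (rule step_coeffs_nonzero)
  with Suc.IH show ?case by fastforce
qed

lemma abs_radial_step_weight_le:
  assumes "N \<ge> 1" and "j = 0 \<or> 2 * real j + 2 \<le> N"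
  shows "\<bar>radial_step_weight N i j i' j'\<bar> / N ^ j' \<le>
    (of_bool (i' = i \<and> j' = j) + of_bool (i' = i + 2 \<and> j' = j)
      + of_bool (i' = i + 1 \<and> j' = j + 1) + of_bool (i' = i \<and> j' = j + 2)) / N ^ j"
proof -
  have "\<bar>2 * real j - N + 1\<bar> / N ^ (j + 1) \<le> N / N ^ (j + 1)"
    using assms by (intro divide_right_mono) auto
  then have first_order: "\<bar>2 * real j - N + 1\<bar> / N ^ (j + 1) \<le> 1 / N ^ j"
    using assms(1) by simp
  have "\<bar>real j * (N - 2 - real j)\<bar> \<le> N * N"
  proof (cases "j = 0")
    case False
    with assms have "2 * real j + 2 \<le> N" by simp
    then show ?thesis by (simp add: abs_of_nonneg mult_mono)
  qed (use assms in simp)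
  then have "\<bar>real j * (N - 2 - real j)\<bar> / N ^ (j + 2) \<le> N * N / N ^ (j + 2)"
    using assms(1) by (intro divide_right_mono) auto
  then have second_order: "\<bar>real j * (N - 2 - real j)\<bar> / N ^ (j + 2) \<le> 1 / N ^ j"
    using assms(1) by simp
  consider "i' = i \<and> j' = j" | "i' = i + 2 \<and> j' = j" | "i' = i + 1 \<and> j' = j + 1" | "i' = i \<and> j' = j + 2"
    | "\<not> (i' = i \<and> j' = j) \<and> \<not> (i' = i + 2 \<and> j' = j) \<and> \<not> (i' = i + 1 \<and> j' = j + 1) \<and> \<not> (i' = i \<and> j' = j + 2)"
    by blast
  then show ?thesis
    by cases (use first_order second_order in \<open>auto simp: radial_step_weight_def\<close>)
qed

lemma sum_abs_radial_step_weight_le: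
  assumes "finite S" and "N \<ge> 1" and "j = 0 \<or> 2 * real j + 2 \<le> N"
  shows "(\<Sum>(i',j')\<in>S. \<bar>radial_step_weight N i j i' j'\<bar> / N ^ j') \<le> 4 / N ^ j"
proof -
  have hit_le_1: "(\<Sum>(i',j')\<in>S. of_bool (i' = i0 \<and> j' = j0)) \<le> (1 :: real)" for i0 j0
    using sum_of_bool_pair_mult[OF \<open>finite S\<close>, of i0 j0 "\<lambda>_ _. 1"] by simp
  have "(\<Sum>(i',j')\<in>S. \<bar>radial_step_weight N i j i' j'\<bar> / N ^ j') \<le>
      (\<Sum>(i',j')\<in>S. (of_bool (i' = i \<and> j' = j) + of_bool (i' = i + 2 \<and> j' = j)
        + of_bool (i' = i + 1 \<and> j' = j + 1) + of_bool (i' = i \<and> j' = j + 2)) / N ^ j)"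
    by (intro sum_mono, clarify, rule abs_radial_step_weight_le[OF assms(2,3)])
  also have "\<dots> = ((\<Sum>(i',j')\<in>S. of_bool (i' = i \<and> j' = j)) + (\<Sum>(i',j')\<in>S. of_bool (i' = i + 2 \<and> j' = j))
      + (\<Sum>(i',j')\<in>S. of_bool (i' = i + 1 \<and> j' = j + 1)) + (\<Sum>(i',j')\<in>S. of_bool (i' = i \<and> j' = j + 2))) / N ^ j"
    by (simp add: sum_divide_distrib[symmetric] sum.distrib case_prod_unfold)
  also have "\<dots> \<le> 4 / N ^ j"
    using assms(2) hit_le_1[of i j] hit_le_1[of "i + 2" j] hit_le_1[of "i + 1" "j + 1"] hit_le_1[of i "j + 2"]
    by (intro divide_right_mono) auto
  finally show ?thesis .
qed

lemma scaled_abs_sum_step_coeffs_le: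
  assumes "finite S" and "N \<ge> 1"
    and small: "\<And>i j. (i, j) \<in> S \<Longrightarrow> a i j \<noteq> 0 \<Longrightarrow> j = 0 \<or> 2 * real j + 2 \<le> N"
  shows "(\<Sum>(i',j')\<in>S. \<bar>step_coeffs S N a i' j'\<bar> / N ^ j') \<le> 4 * (\<Sum>(i,j)\<in>S. \<bar>a i j\<bar> / N ^ j)"
proof -
  have "(\<Sum>(i',j')\<in>S. \<bar>step_coeffs S N a i' j'\<bar> / N ^ j') \<le>
      (\<Sum>(i',j')\<in>S. \<Sum>(i,j)\<in>S. \<bar>a i j\<bar> * (\<bar>radial_step_weight N i j i' j'\<bar> / N ^ j'))"
    unfolding step_coeffs_def case_prod_unfold
    using assms(2) by (intro sum_mono) (auto simp: sum_divide_distrib[symmetric] abs_mult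
        intro!: divide_right_mono order.trans[OF sum_abs] sum_mono)
  also have "\<dots> = (\<Sum>(i,j)\<in>S. \<bar>a i j\<bar> * (\<Sum>(i',j')\<in>S. \<bar>radial_step_weight N i j i' j'\<bar> / N ^ j'))"
    unfolding case_prod_unfold sum_distrib_left by (rule sum.swap)
  also have "\<dots> \<le> (\<Sum>(i,j)\<in>S. \<bar>a i j\<bar> * (4 / N ^ j))"
  proof (intro sum_mono, clarify)
    fix i j assume "(i, j) \<in> S"
    show "\<bar>a i j\<bar> * (\<Sum>(i',j')\<in>S. \<bar>radial_step_weight N i j i' j'\<bar> / N ^ j') \<le> \<bar>a i j\<bar> * (4 / N ^ j)"
    proof (cases "a i j = 0")
      case False
      with \<open>(i, j) \<in> S\<close> show ?thesis
        by (intro mult_left_mono sum_abs_radial_step_weight_le[OF \<open>finite S\<close> \<open>N \<ge> 1\<close> small]) auto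
    qed simp
  qed
  also have "\<dots> = 4 * (\<Sum>(i,j)\<in>S. \<bar>a i j\<bar> / N ^ j)"
    by (simp add: sum_distrib_left case_prod_unfold mult.commute)
  finally show ?thesis .
qed

lemma scaled_abs_sum_radial_coeffs_le:
  assumes "finite S" and "N \<ge> 1" and "real k \<le> N / 4 + 1" and "m \<le> k"
  shows "(\<Sum>(i,j)\<in>S. \<bar>radial_coeffs S N m i j\<bar> / N ^ j) \<le> 4 ^ m"
  using \<open>m \<le> k\<close>
proof (induction m)
  case 0
  have "(\<Sum>(i,j)\<in>S. \<bar>radial_coeffs S N 0 i j\<bar> / N ^ j) = of_bool ((0, 0) \<in> S)"
    using sum_of_bool_pair_mult[OF \<open>finite S\<close>, of 0 0 "\<lambda>_ j. 1 / N ^ j"]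
    by (simp add: radial_coeffs_def case_prod_unfold)
  then show ?case by simp
next
  case (Suc m)
  have "j = 0 \<or> 2 * real j + 2 \<le> N" if "radial_coeffs S N m i j \<noteq> 0" for i j
  proof -
    have "j = 0 \<or> 2 * j + 2 \<le> 4 * m" using radial_coeffs_support[OF that] by auto
    moreover have "4 * real m \<le> N" using assms(3) Suc.prems by simp
    ultimately show ?thesis by (auto dest: of_nat_mono[where 'a = real])
  qed
  then have "(\<Sum>(i,j)\<in>S. \<bar>radial_coeffs S N (Suc m) i j\<bar> / N ^ j) \<le> 4 * (\<Sum>(i,j)\<in>S. \<bar>radial_coeffs S N m i j\<bar> / N ^ j)"
    unfolding radial_coeffs_def funpow.simps o_apply
    by (intro scaled_abs_sum_step_coeffs_le[OF \<open>finite S\<close> \<open>N \<ge> 1\<close>]) (simp add: radial_coeffs_def)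
  also have "\<dots> \<le> 4 ^ Suc m" using Suc by simp
  finally show ?case .
qed

definition expansion_index :: "nat \<Rightarrow> (nat \<times> nat) set" where
  "expansion_index k = {(i,j). i \<le> 2 * k \<and> j \<le> 2 * k - 1 \<and> i + j \<le> 2 * k}"

lemma finite_expansion_index: "finite (expansion_index k)"
  by (rule finite_subset[of _ "{..2 * k} \<times> {..2 * k}"]) (auto simp: expansion_index_def)

lemma id_minus_laplacian_power_radial:
  fixes f :: "real^'n::finite \<Rightarrow> real"
  assumes f: "\<And>x. f x = f1 (norm x)"
    and f1: "\<And>i r. i < 2 * k \<Longrightarrow> r > 0 \<Longrightarrow> (higher_deriv i f1 has_real_derivative higher_deriv (Suc i) f1 r) (at r)"
    and "m \<le> k" and "x \<noteq> 0"
  shows "(id_minus_laplacian ^^ m) f x =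
    radial_sum (expansion_index k) (radial_coeffs (expansion_index k) (real CARD('n)) m) (\<lambda>i. higher_deriv i f1) (norm x)"
  using \<open>m \<le> k\<close> \<open>x \<noteq> 0\<close>
proof (induction m arbitrary: x)
  case 0
  then show ?case
    using sum_of_bool_pair_mult[OF finite_expansion_index, of 0 0 "\<lambda>i j. higher_deriv i f1 (norm x) / norm x ^ j" k]
    by (simp add: f radial_sum_def radial_coeffs_def higher_deriv_def expansion_index_def case_prod_unfold)
next
  case (Suc m)
  let ?a = "radial_coeffs (expansion_index k) (real CARD('n)) m"
  have "(id_minus_laplacian ^^ Suc m) f x = id_minus_laplacian ((id_minus_laplacian ^^ m) f) x"
    by simp
  also have "\<dots> = radial_sum (expansion_index k) (step_coeffs (expansion_index k) (real CARD('n)) ?a)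
      (\<lambda>i. higher_deriv i f1) (norm x)"
  proof (rule id_minus_laplacian_radial_sum[OF finite_expansion_index])
    fix i j assume "?a i j \<noteq> 0"
    with radial_coeffs_support have "i + j \<le> 2 * m" "j \<le> 2 * m - 1" by blast+
    with \<open>Suc m \<le> k\<close> show "(i + 2, j) \<in> expansion_index k \<and> (i + 1, j + 1) \<in> expansion_index k \<and>
        (j \<noteq> 0 \<longrightarrow> (i, j + 2) \<in> expansion_index k)"
      by (auto simp: expansion_index_def)
    fix r :: real assume "r > 0"
    with \<open>i + j \<le> 2 * m\<close> \<open>Suc m \<le> k\<close> show "(higher_deriv i f1 has_real_derivative higher_deriv (Suc i) f1 r) (at r) \<and>
        (higher_deriv (Suc i) f1 has_real_derivative higher_deriv (Suc (Suc i)) f1 r) (at r)"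
      by (auto intro: f1)
  qed (use Suc in auto)
  also have "\<dots> = radial_sum (expansion_index k) (radial_coeffs (expansion_index k) (real CARD('n)) (Suc m))
      (\<lambda>i. higher_deriv i f1) (norm x)"
    by (simp add: radial_coeffs_def)
  finally show ?case .
qed

theorem lemmaF3:
  fixes k :: nat
  assumes "1 \<le> k" and "real k \<le> real CARD('n::finite) / 4 + 1"
  shows "\<exists>c :: nat \<Rightarrow> nat \<Rightarrow> real.
     (\<Sum>(i,j)\<in>{(i,j). i \<le> 2*k \<and> j \<le> 2*k - 1 \<and> i + j \<le> 2*k}. \<bar>c i j\<bar>) \<le> 5 ^ k \<and>
     (\<forall>(f :: real^'n \<Rightarrow> real) (f1 :: real \<Rightarrow> real).
        (\<forall>x. f x = f1 (norm x)) \<and>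
        (\<forall>i < 2*k. \<forall>r > 0. (higher_deriv i f1 has_real_derivative higher_deriv (Suc i) f1 r) (at r)) \<and>
        continuous_on {0<..} (higher_deriv (2*k) f1)
        \<longrightarrow> (\<forall>x. x \<noteq> 0 \<longrightarrow>
              (id_minus_laplacian ^^ k) f x =
              (\<Sum>(i,j)\<in>{(i,j). i \<le> 2*k \<and> j \<le> 2*k - 1 \<and> i + j \<le> 2*k}.
                  c i j * real CARD('n) ^ j * higher_deriv i f1 (norm x) / norm x ^ j)))"
proof -
  define N where "N = real CARD('n)"
  define a where "a = radial_coeffs (expansion_index k) N k"
  have "N \<ge> 1" by (simp add: N_def Suc_leI)
  have index: "{(i,j). i \<le> 2*k \<and> j \<le> 2*k - 1 \<and> i + j \<le> 2*k} = expansion_index k"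
    by (simp add: expansion_index_def)
  show ?thesis
  proof (intro exI[of _ "\<lambda>i j. a i j / N ^ j"] conjI allI impI, unfold index)
    have "(\<Sum>(i,j)\<in>expansion_index k. \<bar>a i j / N ^ j\<bar>) \<le> 4 ^ k"
      using scaled_abs_sum_radial_coeffs_le[OF finite_expansion_index \<open>N \<ge> 1\<close>, of k k] assms(2) \<open>N \<ge> 1\<close>
      by (simp add: a_def N_def)
    also have "(4 :: real) ^ k \<le> 5 ^ k" by (rule power_mono) auto
    finally show "(\<Sum>(i,j)\<in>expansion_index k. \<bar>a i j / N ^ j\<bar>) \<le> 5 ^ k" .
  next
    fix f :: "real^'n \<Rightarrow> real" and f1 :: "real \<Rightarrow> real" and x :: "real^'n"
    assume "(\<forall>x. f x = f1 (norm x)) \<and>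
        (\<forall>i < 2*k. \<forall>r > 0. (higher_deriv i f1 has_real_derivative higher_deriv (Suc i) f1 r) (at r)) \<and>
        continuous_on {0<..} (higher_deriv (2*k) f1)" and "x \<noteq> 0"
    then have "(id_minus_laplacian ^^ k) f x = radial_sum (expansion_index k) a (\<lambda>i. higher_deriv i f1) (norm x)"
      unfolding a_def N_def by (intro id_minus_laplacian_power_radial) auto
    with \<open>N \<ge> 1\<close> show "(id_minus_laplacian ^^ k) f x = (\<Sum>(i,j)\<in>expansion_index k.
        a i j / N ^ j * real CARD('n) ^ j * higher_deriv i f1 (norm x) / norm x ^ j)"
      by (simp add: radial_sum_def N_def case_prod_unfold)
  qed
qed

end
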